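(* Let $n\ge2$ and $q\ge1$ be integers, and for $\theta=(\theta_1,\dots,\theta_{n-1})\in\mathbb{R}^{n-1}$ let $$\Phi(\theta)=\binom n2^{-1}\Big(\sum_{j=1}^{n-1}\cos\theta_j+\sum_{j=2}^{n-1}\sum_{k=1}^{j-1}\cos(\theta_j-\theta_k)\Big).$$ Then for every $\theta\in[-\pi,\pi]^{n-1}$ with $\|\theta\|_\infty>1/\sqrt q$, $$\Phi(\theta)\le1-\frac1{25nq}.$$
   Context: $\Phi$ is the characteristic function of one increment of the $1\times n$ Diaconis–Gangolli walk, restricted to the first $n-1$ coordinates. *)

theory Defs
  imports "HOL-Analysis.Analysis"
begin

text \<open>Characteristic function of one increment of the 1 x n Diaconis-Gangolli walk,
restricted to the first n-1 coordinates. The vector theta in R^(n-1) is represented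
as a function nat => real, of which only the values at indices 1..n-1 are used.\<close>
definition Phi :: "nat \<Rightarrow> (nat \<Rightarrow> real) \<Rightarrow> real" where
  "Phi n \<theta> = (1 / real (n choose 2)) *
     ((\<Sum>j=1..n-1. cos (\<theta> j)) + (\<Sum>j=2..n-1. \<Sum>k=1..j-1. cos (\<theta> j - \<theta> k)))"

end

theory Submission
  imports Defs
begin

(* Put theta_0 = 0. Then Phi(theta) is the average of cos (theta_j - theta_k) over the
   n choose 2 pairs 0 <= k < j <= n - 1, so 1 - Phi(theta) is the average of
   g(j,k) = 1 - cos (theta_j - theta_k) = 2 sin^2 ((theta_j - theta_k) / 2).
   As |sin| of half-differences obeys the triangle inequality, g(m,0) <= 2 (g(m,k) + g(0,k))
   for every k; summing over k bounds n g(m,0) by four times the sum of g over all pairs.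
   Hence 1 - Phi(theta) >= (1 - cos theta_m) / (2 (n - 1)), and |theta_m| > 1 / sqrt q
   gives 1 - cos theta_m >= 1 / (8 q). *)

lemma sum_pairs_split_zero:
  fixes f :: "nat \<Rightarrow> nat \<Rightarrow> 'a::comm_monoid_add"
  shows "(\<Sum>j<Suc n. \<Sum>k<j. f j k) = (\<Sum>j=1..n. f j 0) + (\<Sum>j=2..n. \<Sum>k=1..j-1. f j k)"
proof (induction n)
  case (Suc n)
  have "(\<Sum>k<Suc n. f (Suc n) k) = f (Suc n) 0 + (\<Sum>k=1..n. f (Suc n) k)"
    by (subst sum.lessThan_Suc_shift) (simp add: sum.atLeast1_atMost_eq)
  with Suc show ?case by (simp add: sum.cl_ivl_Suc ac_simps)
qed simp

lemma sum_pairs_one: "(\<Sum>j<n. \<Sum>k<j. 1) = (of_nat (n choose 2) :: 'a::semiring_1)"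
  by (induction n) (simp_all add: numeral_2_eq_2 add.commute)

lemma of_nat_choose_two: "real (n choose 2) = real n * (real n - 1) / 2"
  by (induction n) (simp_all add: numeral_2_eq_2 field_simps)

lemma sum_square_eq_twice_sum_pairs:
  fixes g :: "nat \<Rightarrow> nat \<Rightarrow> 'a::comm_semiring_1"
  assumes "\<And>j k. g j k = g k j" and "\<And>j. g j j = 0"
  shows "(\<Sum>j<n. \<Sum>k<n. g j k) = 2 * (\<Sum>j<n. \<Sum>k<j. g j k)"
proof (induction n)
  case (Suc n)
  have "(\<Sum>j<n. g j n) = (\<Sum>k<n. g n k)" using assms(1) by simp
  with Suc show ?case by (simp add: sum.distrib assms(2) algebra_simps mult_2)
qed simp

lemma card_mult_le_sum_square:
  fixes g :: "'a \<Rightarrow> 'a \<Rightarrow> real"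
  assumes "finite I" "a \<in> I" "b \<in> I" "a \<noteq> b" "c \<ge> 0"
    and nonneg: "\<And>j k. j \<in> I \<Longrightarrow> k \<in> I \<Longrightarrow> g j k \<ge> 0"
    and triangle: "\<And>k. k \<in> I \<Longrightarrow> g a b \<le> c * (g a k + g b k)"
  shows "card I * g a b \<le> c * (\<Sum>j\<in>I. \<Sum>k\<in>I. g j k)"
proof -
  have "card I * g a b \<le> (\<Sum>k\<in>I. c * (g a k + g b k))"
    using sum_mono[of I "\<lambda>_. g a b"] triangle by simp
  also have "\<dots> = c * (\<Sum>j\<in>{a, b}. \<Sum>k\<in>I. g j k)"
    using assms(4) by (simp add: sum_distrib_left sum.distrib distrib_left)
  also have "\<dots> \<le> c * (\<Sum>j\<in>I. \<Sum>k\<in>I. g j k)"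
    using assms(1-3,5) nonneg by (intro mult_left_mono sum_mono2 sum_nonneg) auto
  finally show ?thesis .
qed

lemma square_diff_le_twice_sum_squares: "(a - b) ^ 2 \<le> 2 * (a ^ 2 + b ^ 2)"
  for a b :: "'a::linordered_idom"
proof -
  have "0 \<le> (a + b) ^ 2" by simp
  then show ?thesis by (simp add: power2_sum power2_diff)
qed

lemma one_minus_cos_eq: "1 - cos x = 2 * sin (x / 2) ^ 2" for x :: real
  using cos_double_sin[of "x / 2"] by simp

lemma one_minus_cos_diff_le:
  fixes x y z :: real
  shows "1 - cos (x - y) \<le> 2 * ((1 - cos (x - z)) + (1 - cos (y - z)))"
proof -
  define u v where "u = (x - z) / 2" and "v = (y - z) / 2"
  have "sin (u - v) ^ 2 \<le> 2 * ((sin u * cos v) ^ 2 + (cos u * sin v) ^ 2)"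
    unfolding sin_diff by (rule square_diff_le_twice_sum_squares)
  also have "\<dots> \<le> 2 * (sin u ^ 2 + sin v ^ 2)"
    by (intro mult_left_mono add_mono)
      (simp_all add: power_mult_distrib mult_left_le mult_left_le_one_le abs_square_le_1)
  finally have "sin (u - v) ^ 2 \<le> 2 * (sin u ^ 2 + sin v ^ 2)" .
  moreover have "1 - cos (x - y) = 2 * sin (u - v) ^ 2"
    unfolding one_minus_cos_eq u_def v_def by (simp add: diff_divide_distrib)
  moreover have "1 - cos (x - z) = 2 * sin u ^ 2" "1 - cos (y - z) = 2 * sin v ^ 2"
    unfolding u_def v_def by (rule one_minus_cos_eq)+
  ultimately show ?thesis by simp
qed

lemma mult_cos_le_sin:
  fixes z :: real
  assumes "0 \<le> z" "z \<le> pi"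
  shows "z * cos z \<le> sin z"
proof (cases "z = 0")
  case False
  with assms obtain \<xi> where "0 < \<xi>" "\<xi> < z" "sin z - sin 0 = (z - 0) * cos \<xi>"
    using MVT2[of 0 z sin cos] by (auto intro: DERIV_sin)
  moreover have "cos z \<le> cos \<xi>"
    using calculation assms by (intro cos_monotone_0_pi_le) auto
  ultimately show ?thesis using assms by (simp add: mult_left_mono)
qed simp

lemma sq_div_8_le_one_minus_cos:
  fixes y :: real
  assumes "0 \<le> y" "y \<le> 1"
  shows "y ^ 2 / 8 \<le> 1 - cos y"
proof -
  have "1 / 2 \<le> cos (y / 2)"
    using cos_monotone_0_pi_le[of "y / 2" "pi / 3"] assms pi_gt3 by (simp add: cos_60)
  then have "y / 4 \<le> sin (y / 2)"
    using mult_cos_le_sin[of "y / 2"] mult_left_mono[of "1/2" "cos (y / 2)" "y / 2"] assms pi_gt3 by simp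
  then have "(y / 4) ^ 2 \<le> sin (y / 2) ^ 2"
    using assms by (intro power_mono) auto
  then show ?thesis by (simp add: one_minus_cos_eq power_divide)
qed

lemma one_minus_Phi_eq_sum_pairs:
  assumes "n \<ge> 2"
  shows "1 - Phi n \<theta> =
    (\<Sum>j<n. \<Sum>k<j. 1 - cos ((\<theta>(0 := 0)) j - (\<theta>(0 := 0)) k)) / real (n choose 2)"
proof -
  let ?\<theta>0 = "\<theta>(0 := 0)"
  have n: "n = Suc (n - 1)" using assms by simp
  have "(\<Sum>j<n. \<Sum>k<j. cos (?\<theta>0 j - ?\<theta>0 k)) =
      (\<Sum>j=1..n-1. cos (?\<theta>0 j - ?\<theta>0 0)) + (\<Sum>j=2..n-1. \<Sum>k=1..j-1. cos (?\<theta>0 j - ?\<theta>0 k))"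
    by (subst n) (rule sum_pairs_split_zero)
  also have "\<dots> = (\<Sum>j=1..n-1. cos (\<theta> j)) + (\<Sum>j=2..n-1. \<Sum>k=1..j-1. cos (\<theta> j - \<theta> k))"
    by (intro arg_cong2[where f = "(+)"] sum.cong) auto
  finally have "Phi n \<theta> = (\<Sum>j<n. \<Sum>k<j. cos (?\<theta>0 j - ?\<theta>0 k)) / real (n choose 2)"
    by (simp add: Phi_def)
  moreover have "real (n choose 2) > 0" using assms by simp
  ultimately have "1 - Phi n \<theta> =
      (real (n choose 2) - (\<Sum>j<n. \<Sum>k<j. cos (?\<theta>0 j - ?\<theta>0 k))) / real (n choose 2)"
    by (simp add: diff_divide_distrib)
  also have "\<dots> = (\<Sum>j<n. \<Sum>k<j. 1 - cos (?\<theta>0 j - ?\<theta>0 k)) / real (n choose 2)"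
    by (simp only: sum_subtractf sum_pairs_one)
  finally show ?thesis .
qed

lemma one_minus_cos_le_one_minus_Phi:
  assumes "n \<ge> 2" "m \<in> {1..n-1}"
  shows "(1 - cos (\<theta> m)) / (2 * (real n - 1)) \<le> 1 - Phi n \<theta>"
proof -
  define g where "g j k = 1 - cos ((\<theta>(0 := 0)) j - (\<theta>(0 := 0)) k)" for j k
  have g_triangle: "g m 0 \<le> 2 * (g m k + g 0 k)" for k
    unfolding g_def by (rule one_minus_cos_diff_le)
  have g_nonneg: "g j k \<ge> 0" for j k
    by (simp add: g_def)
  have g_sym: "g j k = g k j" for j k
    unfolding g_def by (metis cos_minus minus_diff_eq)
  have "real n * g m 0 \<le> 2 * (\<Sum>j<n. \<Sum>k<n. g j k)"
    using card_mult_le_sum_square[of "{..<n}" m 0 2 g] assms(2) g_nonneg g_triangle by auto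
  also have "\<dots> = 4 * (\<Sum>j<n. \<Sum>k<j. g j k)"
    using sum_square_eq_twice_sum_pairs[of g n] g_sym by (simp add: g_def)
  also have "\<dots> = 2 * real n * (real n - 1) * (1 - Phi n \<theta>)"
    unfolding one_minus_Phi_eq_sum_pairs[OF assms(1)] of_nat_choose_two g_def
    using assms(1) by simp
  finally have "real n * (1 - cos (\<theta> m)) \<le> real n * (2 * (real n - 1) * (1 - Phi n \<theta>))"
    using assms(2) by (simp add: g_def algebra_simps)
  then have "1 - cos (\<theta> m) \<le> 2 * (real n - 1) * (1 - Phi n \<theta>)"
    using assms(1) by simp
  then show ?thesis
    using assms(1) by (simp add: divide_le_eq mult.commute)
qed

theorem mainTheorem11:
  fixes n q :: nat and \<theta> :: "nat \<Rightarrow> real"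
  assumes "n \<ge> 2" and "q \<ge> 1"
    and "\<forall>j\<in>{1..n-1}. -pi \<le> \<theta> j \<and> \<theta> j \<le> pi"
    and "\<exists>j\<in>{1..n-1}. \<bar>\<theta> j\<bar> > 1 / sqrt (real q)"
  shows "Phi n \<theta> \<le> 1 - 1 / (25 * real n * real q)"
proof -
  obtain m where m: "m \<in> {1..n-1}" "1 / sqrt (real q) < \<bar>\<theta> m\<bar>"
    using assms(4) by blast
  define y where "y = 1 / sqrt (real q)"
  have y: "0 \<le> y" "y \<le> 1" "y ^ 2 = 1 / real q"
    using assms(2) by (auto simp: y_def power_divide)
  have "\<bar>\<theta> m\<bar> \<le> pi"
    using assms(3) m(1) by (auto simp only: abs_le_iff)
  then have "cos \<bar>\<theta> m\<bar> \<le> cos y"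
    using m(2) y(1) by (intro cos_monotone_0_pi_le) (auto simp: y_def)
  then have cos_gap: "1 / (8 * real q) \<le> 1 - cos (\<theta> m)"
    using sq_div_8_le_one_minus_cos[OF y(1,2)] y(3) by simp
  have "1 / (25 * real n * real q) \<le> 1 / (8 * real q) / (2 * (real n - 1))"
    unfolding divide_divide_eq_left using assms(1,2) by (intro frac_le) (simp_all add: algebra_simps)
  also have "\<dots> \<le> (1 - cos (\<theta> m)) / (2 * (real n - 1))"
    using cos_gap assms(1) by (intro divide_right_mono) auto
  also have "\<dots> \<le> 1 - Phi n \<theta>"
    by (rule one_minus_cos_le_one_minus_Phi[OF assms(1) m(1)])
  finally show ?thesis by simp
qed

end
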